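(* Consider a single user with $N$ movable antennas at positions $\mathbf w=[w_1,\dots,w_N]^T$, power $P>0$, aperture $W>0$, $L$ propagation paths, and channel $\mathbf G(\mathbf w)=\sqrt{MN}\,\mathbf A_{\mathrm R}\boldsymbol\Gamma\mathbf A_{\mathrm T}^H(\mathbf w)\in\mathbb C^{M\times N}$. Let $\mathcal W=\{\mathbf w\in\mathbb R^N:0\le w_n\le W\ \forall n,\ w_n\ne w_{n'}\ \forall n\ne n'\}$. Consider the problems $$\text{(A)}:\ \max_{\mathbf Q,\mathbf w}\ \log|\mathbf G(\mathbf w)\mathbf Q\mathbf G^H(\mathbf w)+\mathbf I_M|\ \text{ s.t. } \mathbf Q\in\mathbb C^{N\times N},\ \mathbf Q\succeq\mathbf 0,\ \mathrm{tr}(\mathbf Q)\le P,\ \mathbf w\in\mathcal W,$$ $$\text{(B)}:\ \max_{\mathbf F,\mathbf w}\ \log|\mathbf G^H(\mathbf w)\mathbf F\mathbf G(\mathbf w)+\mathbf I_N|\ \text{ s.t. } \mathbf F\in\mathbb C^{M\times M},\ \mathbf F\succeq\mathbf 0,\ \mathrm{tr}(\mathbf F)\le P,\ \mathbf w\in\mathcal W,$$ and, for fixed $\mathbf w$, the subproblems (A$_{\mathbf w}$): maximize the objective of (A) over $\mathbf Q\succeq\mathbf 0$, $\mathrm{tr}(\mathbf Q)\le P$; and (B$_{\mathbf w}$): maximize the objective of (B) over $\mathbf F\succeq\mathbf 0$, $\mathrm{tr}(\mathbf F)\le P$. Suppose $(\mathbf Q^*,\mathbf w^* )$ is an optimal solution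 of (A) and $(\mathbf F^\divideontimes,\mathbf w^\divideontimes)$ is an optimal solution of (B). Then: 1. $\log|\mathbf G(\mathbf w^* )\mathbf Q^*\mathbf G^H(\mathbf w^* )+\mathbf I_M|=\log|\mathbf G^H(\mathbf w^\divideontimes)\mathbf F^\divideontimes\mathbf G(\mathbf w^\divideontimes)+\mathbf I_N|$. 2. If $\mathbf F^*$ is an optimal solution of (B$_{\mathbf w^*}$), then $(\mathbf F^*,\mathbf w^* )$ is an optimal solution of (B), and $\log|\mathbf G^H(\mathbf w^* )\mathbf F^*\mathbf G(\mathbf w^* )+\mathbf I_N|=\log|\mathbf G^H(\mathbf w^\divideontimes)\mathbf F^\divideontimes\mathbf G(\mathbf w^\divideontimes)+\mathbf I_N|$. 3. If $\mathbf Q^\divideontimes$ is an optimal solution of (A$_{\mathbf w^\divideontimes}$), then $(\mathbf Q^\divideontimes,\mathbf w^\divideontimes)$ is an optimal solution of (A), and $\log|\mathbf G(\mathbf w^* )\mathbf Q^*\mathbf G^H(\mathbf w^* )+\mathbf I_M|=\log|\mathbf G(\mathbf w^\divideontimes)\mathbf Q^\divideontimes\mathbf G^H(\mathbf w^\divideontimes)+\mathbf I_M|$.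
   Context: The base station has an $M$-antenna uniform linear array with spacing $d=\lambda/2$ ($\lambda$ the wavelength). The $L$ paths have complex gains $\gamma_l$, angles of arrival $\beta_l\in[0,\pi]$ and angles of departure $\theta_l\in[0,\pi]$. $\mathbf a_{\mathrm R}(\beta)=\frac1{\sqrt M}[1,e^{-j\frac{2\pi}{\lambda}d\cos\beta},\dots,e^{-j\frac{2\pi}{\lambda}(M-1)d\cos\beta}]^T$, $\mathbf a_{\mathrm T}(\theta,\mathbf w)=\frac1{\sqrt N}[e^{-j\frac{2\pi}{\lambda}w_1\cos\theta},\dots,e^{-j\frac{2\pi}{\lambda}w_N\cos\theta}]^T$, $\mathbf A_{\mathrm R}=[\mathbf a_{\mathrm R}(\beta_l)]_{l=1}^L\in\mathbb C^{M\times L}$, $\mathbf A_{\mathrm T}(\mathbf w)=[\mathbf a_{\mathrm T}(\theta_l,\mathbf w)]_{l=1}^L\in\mathbb C^{N\times L}$, $\boldsymbol\Gamma=\mathrm{diag}(\gamma_1,\dots,\gamma_L)$. $|\cdot|$ denotes determinant. *)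

theory Defs
  imports "Jordan_Normal_Form.Schur_Decomposition"
begin

text \<open>Receive steering matrix A_R = [a_R(beta_l)]_l (M x L), ULA with spacing d = lam/2;
  antenna index m = 0..M-1.\<close>
definition A_R :: "nat \<Rightarrow> nat \<Rightarrow> real \<Rightarrow> (nat \<Rightarrow> real) \<Rightarrow> complex mat" where
  "A_R M L lam beta = mat M L (\<lambda>(m, l).
      exp (- \<i> * complex_of_real (2 * pi / lam * (real m * (lam / 2)) * cos (beta l)))
      / complex_of_real (sqrt (real M)))"

text \<open>Transmit steering matrix A_T(w) = [a_T(theta_l, w)]_l (N x L); antenna n = 0..N-1
  sits at position w $ n.\<close>
definition A_T :: "nat \<Rightarrow> nat \<Rightarrow> real \<Rightarrow> (nat \<Rightarrow> real) \<Rightarrow> real vec \<Rightarrow> complex mat" where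
  "A_T N L lam theta w = mat N L (\<lambda>(n, l).
      exp (- \<i> * complex_of_real (2 * pi / lam * (w $ n) * cos (theta l)))
      / complex_of_real (sqrt (real N)))"

definition Gamma_mat :: "nat \<Rightarrow> (nat \<Rightarrow> complex) \<Rightarrow> complex mat" where
  "Gamma_mat L gamma = mat L L (\<lambda>(i, j). if i = j then gamma i else 0)"

definition chan :: "nat \<Rightarrow> nat \<Rightarrow> nat \<Rightarrow> real \<Rightarrow> (nat \<Rightarrow> complex) \<Rightarrow> (nat \<Rightarrow> real)
    \<Rightarrow> (nat \<Rightarrow> real) \<Rightarrow> real vec \<Rightarrow> complex mat" where
  "chan M N L lam gamma beta theta w =
     complex_of_real (sqrt (real (M * N))) \<cdot>\<^sub>m
       (A_R M L lam beta * Gamma_mat L gamma * mat_adjoint (A_T N L lam theta w))"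

definition psd :: "nat \<Rightarrow> complex mat \<Rightarrow> bool" where
  "psd n Q \<longleftrightarrow> Q \<in> carrier_mat n n \<and> mat_adjoint Q = Q \<and>
     (\<forall>x \<in> carrier_vec n. Im (conjugate x \<bullet> (Q *\<^sub>v x)) = 0 \<and> Re (conjugate x \<bullet> (Q *\<^sub>v x)) \<ge> 0)"

definition posset :: "nat \<Rightarrow> real \<Rightarrow> real vec set" where
  "posset N W = {w. dim_vec w = N \<and> (\<forall>n<N. 0 \<le> w $ n \<and> w $ n \<le> W) \<and>
                    (\<forall>n<N. \<forall>n'<N. n \<noteq> n' \<longrightarrow> w $ n \<noteq> w $ n')}"

definition mtrace :: "complex mat \<Rightarrow> complex" where
  "mtrace Q = (\<Sum>i<dim_row Q. Q $$ (i, i))"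

definition cov_feas :: "nat \<Rightarrow> real \<Rightarrow> complex mat \<Rightarrow> bool" where
  "cov_feas n P Q \<longleftrightarrow> psd n Q \<and> Re (mtrace Q) \<le> P"

definition objA :: "complex mat \<Rightarrow> complex mat \<Rightarrow> real" where
  "objA G Q = ln (Re (det (G * Q * mat_adjoint G + 1\<^sub>m (dim_row G))))"

definition objB :: "complex mat \<Rightarrow> complex mat \<Rightarrow> real" where
  "objB G F = ln (Re (det (mat_adjoint G * F * G + 1\<^sub>m (dim_col G))))"

definition optA :: "(real vec \<Rightarrow> complex mat) \<Rightarrow> nat \<Rightarrow> real \<Rightarrow> real \<Rightarrow> complex mat \<Rightarrow> real vec \<Rightarrow> bool" where
  "optA Gf N W P Q w \<longleftrightarrow> cov_feas N P Q \<and> w \<in> posset N W \<and>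
     (\<forall>Q' w'. cov_feas N P Q' \<and> w' \<in> posset N W \<longrightarrow> objA (Gf w') Q' \<le> objA (Gf w) Q)"

definition optB :: "(real vec \<Rightarrow> complex mat) \<Rightarrow> nat \<Rightarrow> nat \<Rightarrow> real \<Rightarrow> real \<Rightarrow> complex mat \<Rightarrow> real vec \<Rightarrow> bool" where
  "optB Gf M N W P F w \<longleftrightarrow> cov_feas M P F \<and> w \<in> posset N W \<and>
     (\<forall>F' w'. cov_feas M P F' \<and> w' \<in> posset N W \<longrightarrow> objB (Gf w') F' \<le> objB (Gf w) F)"

definition optA_w :: "(real vec \<Rightarrow> complex mat) \<Rightarrow> nat \<Rightarrow> real \<Rightarrow> real vec \<Rightarrow> complex mat \<Rightarrow> bool" where
  "optA_w Gf N P w Q \<longleftrightarrow> cov_feas N P Q \<and>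
     (\<forall>Q'. cov_feas N P Q' \<longrightarrow> objA (Gf w) Q' \<le> objA (Gf w) Q)"

definition optB_w :: "(real vec \<Rightarrow> complex mat) \<Rightarrow> nat \<Rightarrow> real \<Rightarrow> real vec \<Rightarrow> complex mat \<Rightarrow> bool" where
  "optB_w Gf M P w F \<longleftrightarrow> cov_feas M P F \<and>
     (\<forall>F'. cov_feas M P F' \<longrightarrow> objB (Gf w) F' \<le> objB (Gf w) F)"

end

theory Submission
  imports Defs
begin

text \<open>Sylvester's identity gives \<open>|G Q G\<^sup>H + I| = |Q G\<^sup>H G + I|\<close>. From a thin singular value
  decomposition \<open>G\<^sup>H X = V S\<close>, \<open>G\<^sup>H G = V S\<^sup>2 V\<^sup>H\<close> (\<open>V\<close> unitary, \<open>X\<^sup>H X\<close> a diagonal projection) the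
  receive covariance \<open>F = X V\<^sup>H Q V X\<^sup>H\<close> has trace at most \<open>tr Q\<close> and
  \<open>|G\<^sup>H F G + I| = |Z S\<^sup>2 + I| = |G Q G\<^sup>H + I|\<close> with \<open>Z = V\<^sup>H Q V\<close>; applied to \<open>G\<^sup>H\<close> this gives the
  converse. Hence at every position the two covariance problems attain the same values, and the
  claims about optimal solutions follow by comparing maxima.\<close>

section \<open>Adjoints, traces and Sylvester's determinant identity\<close>

lemma mat_adjoint_alt:
  "mat_adjoint A = mat (dim_col A) (dim_row A) (\<lambda>(i, j). conjugate (A $$ (j, i)))"
  unfolding mat_adjoint_def by (rule eq_matI) (auto simp: mat_of_rows_def)

lemma dim_mat_adjoint [simp]:
  "dim_row (mat_adjoint A) = dim_col A" "dim_col (mat_adjoint A) = dim_row A"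
  by (simp_all add: mat_adjoint_alt)

lemma index_mat_adjoint [simp]:
  "i < dim_col A \<Longrightarrow> j < dim_row A \<Longrightarrow> mat_adjoint A $$ (i, j) = conjugate (A $$ (j, i))"
  by (simp add: mat_adjoint_alt)

lemma mat_adjoint_carrier [simp]: "A \<in> carrier_mat m n \<Longrightarrow> mat_adjoint A \<in> carrier_mat n m"
  by (intro carrier_matI) auto

lemma row_mat_adjoint: "i < dim_col A \<Longrightarrow> row (mat_adjoint A) i = conjugate (col A i)"
  by (rule eq_vecI) auto

lemma mat_adjoint_adjoint [simp]: "mat_adjoint (mat_adjoint A) = A"
  by (rule eq_matI) auto

lemma mat_adjoint_one [simp]: "mat_adjoint (1\<^sub>m n :: complex mat) = 1\<^sub>m n"
  by (rule eq_matI) auto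

lemma mat_adjoint_mult:
  fixes A B :: "complex mat"
  assumes "A \<in> carrier_mat m n" "B \<in> carrier_mat n k"
  shows "mat_adjoint (A * B) = mat_adjoint B * mat_adjoint A"
  using assms by (intro eq_matI)
    (auto simp: scalar_prod_def cnj_sum mult.commute)

lemma scalar_prod_mat_adjoint:
  fixes X :: "complex mat"
  assumes X: "X \<in> carrier_mat m n" and x: "x \<in> carrier_vec m" and y: "y \<in> carrier_vec n"
  shows "conjugate x \<bullet> (X *\<^sub>v y) = conjugate (mat_adjoint X *\<^sub>v x) \<bullet> y"
proof -
  have "conjugate x \<bullet> (X *\<^sub>v y) = (\<Sum>i\<in>{0..<m}. \<Sum>j\<in>{0..<n}. cnj (x $ i) * (X $$ (i, j) * y $ j))"
    using X x y by (auto simp: scalar_prod_def sum_distrib_left intro!: sum.cong)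
  also have "\<dots> = (\<Sum>j\<in>{0..<n}. \<Sum>i\<in>{0..<m}. cnj (x $ i) * (X $$ (i, j) * y $ j))"
    by (rule sum.swap)
  also have "\<dots> = conjugate (mat_adjoint X *\<^sub>v x) \<bullet> y"
    using X x y by (auto simp: scalar_prod_def sum_distrib_right cnj_sum intro!: sum.cong)
  finally show ?thesis .
qed

lemma assoc_mult_mat_dims:
  assumes "dim_col A = dim_row B" "dim_col B = dim_row C"
  shows "A * B * C = A * (B * C)"
  using assms
  by (intro assoc_mult_mat[of _ "dim_row A" "dim_col A" _ "dim_col B" _ "dim_col C"])
    (auto intro!: carrier_matI)

lemma mtrace_mult_comm:
  assumes A: "A \<in> carrier_mat m n" and B: "B \<in> carrier_mat n m"
  shows "mtrace (A * B) = mtrace (B * A)"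
proof -
  have "mtrace (A * B) = (\<Sum>i<m. \<Sum>j<n. A $$ (i, j) * B $$ (j, i))"
    unfolding mtrace_def using A B by (auto simp: scalar_prod_def atLeast0LessThan intro!: sum.cong)
  also have "\<dots> = (\<Sum>j<n. \<Sum>i<m. B $$ (j, i) * A $$ (i, j))"
    by (subst sum.swap) (simp add: mult.commute)
  also have "\<dots> = mtrace (B * A)"
    unfolding mtrace_def using A B by (auto simp: scalar_prod_def atLeast0LessThan intro!: sum.cong)
  finally show ?thesis .
qed

text \<open>Both determinants equal that of \<open>[1, -A; B, 1]\<close>, by the factorisations
  \<open>[1, -A; 0, 1] [1 + A B, 0; B, 1] = [1, -A; B, 1] = [1, 0; B, 1 + B A] [1, -A; 0, 1]\<close>.\<close>
lemma det_mult_plus_one_commute: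
  fixes A B :: "'a :: idom mat"
  assumes A: "A \<in> carrier_mat m n" and B: "B \<in> carrier_mat n m"
  shows "det (A * B + 1\<^sub>m m) = det (B * A + 1\<^sub>m n)"
proof -
  define T where "T = four_block_mat (1\<^sub>m m) (- A) (0\<^sub>m n m) (1\<^sub>m n)"
  define M where "M = four_block_mat (1\<^sub>m m) (- A) B (1\<^sub>m n)"
  define L where "L = four_block_mat (1\<^sub>m m + A * B) (0\<^sub>m m n) B (1\<^sub>m n)"
  define R where "R = four_block_mat (1\<^sub>m m) (0\<^sub>m m n) B (1\<^sub>m n + B * A)"
  have AB: "1\<^sub>m m + A * B \<in> carrier_mat m m" and BA: "1\<^sub>m n + B * A \<in> carrier_mat n n"
    using A B by auto
  have T: "T \<in> carrier_mat (m + n) (m + n)" and L: "L \<in> carrier_mat (m + n) (m + n)"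
    and R: "R \<in> carrier_mat (m + n) (m + n)"
    unfolding T_def L_def R_def using A B by auto
  have "det T = 1"
    unfolding T_def using A by (subst det_four_block_mat_lower_left_zero[of _ m _ n]) auto
  moreover have "det L = det (1\<^sub>m m + A * B)"
    unfolding L_def using B by (subst det_four_block_mat_upper_right_zero[OF AB]) auto
  moreover have "det R = det (1\<^sub>m n + B * A)"
    unfolding R_def using B BA by (subst det_four_block_mat_upper_right_zero[of _ m _ n]) auto
  moreover have "T * L = M"
    unfolding T_def L_def M_def
    by (subst mult_four_block_mat[OF one_carrier_mat _ zero_carrier_mat one_carrier_mat
          AB zero_carrier_mat B one_carrier_mat])
      (use A B in \<open>auto simp: add_uminus_minus_mat\<close>)
  moreover have "R * T = M"
    unfolding T_def R_def M_def
    by (subst mult_four_block_mat[OF one_carrier_mat zero_carrier_mat B BA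
          one_carrier_mat _ zero_carrier_mat one_carrier_mat])
      (use A B in \<open>auto simp: comm_add_mat[of "- (B * A)" n n] add_uminus_minus_mat\<close>)
  ultimately show ?thesis
    using det_mult[OF T L] det_mult[OF R T] comm_add_mat[OF one_carrier_mat, of "A * B"]
      comm_add_mat[OF one_carrier_mat, of "B * A"] A B by simp
qed

section \<open>Positive semidefinite and unitary matrices\<close>

lemma mat_adjoint_congruence:
  fixes X Q :: "complex mat"
  assumes X: "X \<in> carrier_mat m n" and Q: "Q \<in> carrier_mat n n"
  shows "mat_adjoint (X * Q * mat_adjoint X) = X * mat_adjoint Q * mat_adjoint X"
proof -
  have "mat_adjoint (X * Q * mat_adjoint X) = X * mat_adjoint (X * Q)"
    by (simp add: mat_adjoint_mult[OF mult_carrier_mat[OF X Q] mat_adjoint_carrier[OF X]])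
  also have "\<dots> = X * mat_adjoint Q * mat_adjoint X"
    using carrier_matD[OF X] carrier_matD[OF Q] by (simp add: mat_adjoint_mult[OF X Q] assoc_mult_mat_dims)
  finally show ?thesis .
qed

lemma psd_congruence:
  assumes Q: "psd n Q" and X: "X \<in> carrier_mat m n"
  shows "psd m (X * Q * mat_adjoint X)"
proof -
  have Qc: "Q \<in> carrier_mat n n" and QH: "mat_adjoint Q = Q" using Q unfolding psd_def by auto
  have "mat_adjoint (X * Q * mat_adjoint X) = X * Q * mat_adjoint X"
    using QH by (simp add: mat_adjoint_congruence[OF X Qc])
  moreover have "Im (conjugate x \<bullet> ((X * Q * mat_adjoint X) *\<^sub>v x)) = 0 \<and>
      Re (conjugate x \<bullet> ((X * Q * mat_adjoint X) *\<^sub>v x)) \<ge> 0" if x: "x \<in> carrier_vec m" for x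
  proof -
    define y where "y = mat_adjoint X *\<^sub>v x"
    have y: "y \<in> carrier_vec n" unfolding y_def by (rule mult_mat_vec_carrier[OF _ x]) (use X in simp)
    have "(X * Q * mat_adjoint X) *\<^sub>v x = X *\<^sub>v (Q *\<^sub>v y)"
      unfolding y_def
      using assoc_mult_mat_vec[OF mult_carrier_mat[OF X Qc] mat_adjoint_carrier[OF X] x]
        assoc_mult_mat_vec[OF X Qc y[unfolded y_def]] by simp
    then have "conjugate x \<bullet> ((X * Q * mat_adjoint X) *\<^sub>v x) = conjugate y \<bullet> (Q *\<^sub>v y)"
      using scalar_prod_mat_adjoint[OF X x, of "Q *\<^sub>v y"] Qc y unfolding y_def by auto
    then show ?thesis using Q y unfolding psd_def by auto
  qed
  ultimately show ?thesis unfolding psd_def using X Qc by auto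
qed

lemma psd_diag_entry:
  assumes Q: "psd n Q" and i: "i < n"
  shows "Q $$ (i, i) = complex_of_real (Re (Q $$ (i, i)))" "Re (Q $$ (i, i)) \<ge> 0"
proof -
  have Qc: "Q \<in> carrier_mat n n" and QH: "mat_adjoint Q = Q" using Q unfolding psd_def by auto
  have "cnj (Q $$ (i, i)) = Q $$ (i, i)" using arg_cong[OF QH, of "\<lambda>M. M $$ (i, i)"] Qc i by auto
  then show "Q $$ (i, i) = complex_of_real (Re (Q $$ (i, i)))"
    by (simp add: complex_eq_iff)
  have "conjugate (unit_vec n i) = (unit_vec n i :: complex vec)"
    by (rule eq_vecI) (auto simp: unit_vec_def)
  then have "conjugate (unit_vec n i) \<bullet> (Q *\<^sub>v unit_vec n i) = Q $$ (i, i)"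
    using Qc i by simp
  moreover have "0 \<le> Re (conjugate (unit_vec n i) \<bullet> (Q *\<^sub>v unit_vec n i))"
    using Q unit_vec_carrier[of n i] unfolding psd_def by blast
  ultimately show "Re (Q $$ (i, i)) \<ge> 0" by simp
qed

lemma psd_one: "psd n (1\<^sub>m n)"
  unfolding psd_def
proof (intro conjI ballI)
  fix x :: "complex vec" assume x: "x \<in> carrier_vec n"
  have e: "conjugate x \<bullet> (1\<^sub>m n *\<^sub>v x) = (\<Sum>i\<in>{0..<n}. cnj (x $ i) * x $ i)"
    using x by (auto simp: scalar_prod_def intro!: sum.cong)
  show "Im (conjugate x \<bullet> (1\<^sub>m n *\<^sub>v x)) = 0" unfolding e Im_sum by simp
  show "Re (conjugate x \<bullet> (1\<^sub>m n *\<^sub>v x)) \<ge> 0" unfolding e Re_sum by (rule sum_nonneg) simp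
qed auto

definition unitary_mat :: "nat \<Rightarrow> complex mat \<Rightarrow> bool" where
  "unitary_mat n U \<longleftrightarrow> U \<in> carrier_mat n n \<and> mat_adjoint U * U = 1\<^sub>m n"

lemma unitary_matD:
  assumes "unitary_mat n U"
  shows "U \<in> carrier_mat n n" "mat_adjoint U * U = 1\<^sub>m n" "U * mat_adjoint U = 1\<^sub>m n"
  using assms mat_mult_left_right_inverse[of "mat_adjoint U" n U] unfolding unitary_mat_def by auto

lemma unitary_mat_mult:
  assumes U: "unitary_mat n U" and V: "unitary_mat n V"
  shows "unitary_mat n (U * V)"
proof -
  note Uc = unitary_matD(1)[OF U] and Vc = unitary_matD(1)[OF V]
  have "mat_adjoint (U * V) * (U * V) = mat_adjoint V * ((mat_adjoint U * U) * V)"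
    using carrier_matD[OF Uc] carrier_matD[OF Vc]
    by (simp add: mat_adjoint_mult[OF Uc Vc] assoc_mult_mat_dims)
  also have "\<dots> = 1\<^sub>m n" using Vc unitary_matD(2)[OF U] unitary_matD(2)[OF V] by simp
  finally show ?thesis unfolding unitary_mat_def using Uc Vc by simp
qed

definition vec_normalize :: "complex vec \<Rightarrow> complex vec" where
  "vec_normalize w = complex_of_real (1 / sqrt (Re (w \<bullet>c w))) \<cdot>\<^sub>v w"

lemma vec_normalize_carrier [simp]: "w \<in> carrier_vec n \<Longrightarrow> vec_normalize w \<in> carrier_vec n"
  by (simp add: vec_normalize_def)

lemma unitary_mat_of_corthogonal:
  assumes ws: "set ws \<subseteq> carrier_vec n" and orth: "corthogonal ws" and len: "length ws = n"
  shows "unitary_mat n (mat_of_cols n (map vec_normalize ws))" (is "unitary_mat n ?U")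
proof -
  define c where "c w = complex_of_real (1 / sqrt (Re (w \<bullet>c w)))" for w :: "complex vec"
  have wsi: "i < n \<Longrightarrow> ws ! i \<in> carrier_vec n" for i using ws len by auto
  have U: "?U \<in> carrier_mat n n" using len by auto
  have col: "i < n \<Longrightarrow> col ?U i = c (ws ! i) \<cdot>\<^sub>v ws ! i" for i
    using len wsi by (simp add: vec_normalize_def c_def)
  have "mat_adjoint ?U * ?U = 1\<^sub>m n"
  proof (rule eq_matI)
    fix i j assume "i < dim_row (1\<^sub>m n :: complex mat)" "j < dim_col (1\<^sub>m n :: complex mat)"
    then have i: "i < n" and j: "j < n" by auto
    have "(mat_adjoint ?U * ?U) $$ (i, j) = conjugate (col ?U i) \<bullet> col ?U j"
      using U i j len by (simp add: row_mat_adjoint)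
    also have "\<dots> = conjugate (c (ws ! i) \<cdot>\<^sub>v ws ! i) \<bullet> (c (ws ! j) \<cdot>\<^sub>v ws ! j)"
      by (simp only: col i j)
    also have "\<dots> = cnj (c (ws ! i)) * c (ws ! j) * (ws ! j \<bullet>c ws ! i)"
      using wsi[OF i] wsi[OF j]
      by (simp add: conjugate_smult_vec conjugate_vec_sprod_comm mult.assoc)
    also have "\<dots> = 1\<^sub>m n $$ (i, j)"
    proof (cases "i = j")
      case True
      define r where "r = Re (ws ! i \<bullet>c ws ! i)"
      have "ws ! i \<bullet>c ws ! i \<ge> 0" by (rule conjugate_square_ge_0_vec)
      moreover have "ws ! i \<bullet>c ws ! i \<noteq> 0" using orth len i unfolding corthogonal_def by auto
      ultimately have self: "ws ! i \<bullet>c ws ! i = complex_of_real r" and r: "r > 0"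
        unfolding r_def by (auto simp: less_eq_complex_def complex_eq_iff less_le)
      have "cnj (c (ws ! i)) * c (ws ! i) * (ws ! i \<bullet>c ws ! i)
          = complex_of_real (1 / sqrt r * (1 / sqrt r) * r)"
        unfolding c_def self r_def[symmetric] by (simp flip: of_real_mult)
      also have "1 / sqrt r * (1 / sqrt r) * r = 1" using r by (simp add: field_simps)
      finally show ?thesis using True i by simp
    next
      case False
      then show ?thesis using orth len i j unfolding corthogonal_def by auto
    qed
    finally show "(mat_adjoint ?U * ?U) $$ (i, j) = 1\<^sub>m n $$ (i, j)" .
  qed (use U in auto)
  then show ?thesis unfolding unitary_mat_def using U by blast
qed

lemma unitary_mat_with_first_col:
  assumes v: "v \<in> carrier_vec n" and v0: "v \<noteq> 0\<^sub>v n"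
  obtains U c where "unitary_mat n U" "col U 0 = c \<cdot>\<^sub>v v"
proof -
  interpret cof_vec_space n "TYPE(complex)" .
  define b where "b = basis_completion v"
  from basis_completion[OF v v0, folded b_def]
  have dist_b: "distinct b" and indep: "\<not> lin_dep (set b)" and b: "set b \<subseteq> carrier_vec n"
    and hdb: "hd b = v" and len_b: "length b = n" by auto
  have n: "n \<noteq> 0" using v v0 by (intro notI) auto
  from hdb len_b n obtain vs where bv: "b = v # vs" by (cases b) auto
  define ws where "ws = gram_schmidt n b"
  from gram_schmidt_result[OF b dist_b indep refl, folded ws_def]
  have ws: "set ws \<subseteq> carrier_vec n" "corthogonal ws" "length ws = n" by (auto simp: len_b)
  have "ws ! 0 = v"
    using gram_schmidt_hd[OF v, of vs] ws(3) n unfolding ws_def bv by (cases "gram_schmidt n (v # vs)") auto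
  moreover have "ws ! 0 \<in> carrier_vec n" using ws n by auto
  ultimately have "col (mat_of_cols n (map vec_normalize ws)) 0 = vec_normalize v"
    using ws n by auto
  with unitary_mat_of_corthogonal[OF ws] show ?thesis
    by (intro that) (auto simp: vec_normalize_def)
qed

section \<open>Spectral theorem for Hermitian matrices\<close>

definition block_diag_mat :: "'a :: zero mat \<Rightarrow> 'a mat \<Rightarrow> 'a mat" where
  "block_diag_mat X Y = four_block_mat X (0\<^sub>m (dim_row X) (dim_col Y)) (0\<^sub>m (dim_row Y) (dim_col X)) Y"

lemma block_diag_mat_carrier:
  "X \<in> carrier_mat a a \<Longrightarrow> Y \<in> carrier_mat b b \<Longrightarrow> block_diag_mat X Y \<in> carrier_mat (a + b) (a + b)"
  unfolding block_diag_mat_def by auto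

lemma block_diag_mat_mult:
  fixes X1 :: "'a :: semiring_0 mat"
  assumes X1: "X1 \<in> carrier_mat a a" and X2: "X2 \<in> carrier_mat a a"
    and Y1: "Y1 \<in> carrier_mat b b" and Y2: "Y2 \<in> carrier_mat b b"
  shows "block_diag_mat X1 Y1 * block_diag_mat X2 Y2 = block_diag_mat (X1 * X2) (Y1 * Y2)"
  using assms unfolding block_diag_mat_def
  by (subst mult_four_block_mat[of _ a a _ b _ b _ _ a _ b])
    (auto simp: left_mult_zero_mat right_mult_zero_mat intro!: cong_four_block_mat)

lemma mat_adjoint_block_diag_mat:
  "X \<in> carrier_mat a a \<Longrightarrow> Y \<in> carrier_mat b b \<Longrightarrow>
    mat_adjoint (block_diag_mat X Y) = block_diag_mat (mat_adjoint X) (mat_adjoint Y)"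
  by (rule eq_matI) (auto simp: block_diag_mat_def)

lemma block_diag_mat_one: "block_diag_mat (1\<^sub>m a) (1\<^sub>m b) = 1\<^sub>m (a + b)"
  by (rule eq_matI) (auto simp: block_diag_mat_def)

lemma diagonal_block_diag_mat:
  "X \<in> carrier_mat a a \<Longrightarrow> Y \<in> carrier_mat b b \<Longrightarrow> diagonal_mat X \<Longrightarrow> diagonal_mat Y \<Longrightarrow>
    diagonal_mat (block_diag_mat X Y)"
  unfolding diagonal_mat_def block_diag_mat_def by auto

lemma unitary_mat_block_diag_one:
  assumes U: "unitary_mat k U"
  shows "unitary_mat (Suc k) (block_diag_mat (1\<^sub>m 1) U)"
proof -
  note Uc = unitary_matD(1)[OF U]
  have "mat_adjoint (block_diag_mat (1\<^sub>m 1) U) * block_diag_mat (1\<^sub>m 1) U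
      = block_diag_mat (1\<^sub>m 1) (mat_adjoint U * U)"
    by (simp add: mat_adjoint_block_diag_mat[OF one_carrier_mat Uc]
        block_diag_mat_mult[OF one_carrier_mat one_carrier_mat mat_adjoint_carrier[OF Uc] Uc])
  moreover have "block_diag_mat (1\<^sub>m 1) U \<in> carrier_mat (Suc k) (Suc k)"
    using block_diag_mat_carrier[OF one_carrier_mat[of 1] Uc] by simp
  ultimately show ?thesis
    using unitary_matD(2)[OF U] unfolding unitary_mat_def by (simp add: block_diag_mat_one)
qed

lemma hermitian_block_diag_of_first_col:
  fixes B :: "complex mat"
  assumes B: "B \<in> carrier_mat (Suc k) (Suc k)" and BH: "mat_adjoint B = B"
    and colB: "col B 0 = e \<cdot>\<^sub>v unit_vec (Suc k) 0"
  obtains A' where "A' \<in> carrier_mat k k" "mat_adjoint A' = A'"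
    "B = block_diag_mat (mat 1 1 (\<lambda>_. e)) A'"
proof -
  have B0: "i < Suc k \<Longrightarrow> B $$ (i, 0) = (if i = 0 then e else 0)" for i
    using arg_cong[OF colB, of "\<lambda>x. x $ i"] B by auto
  have Bsym: "i < Suc k \<Longrightarrow> j < Suc k \<Longrightarrow> B $$ (i, j) = cnj (B $$ (j, i))" for i j
    using arg_cong[OF BH, of "\<lambda>M. M $$ (i, j)"] B by auto
  have B00: "B $$ (0, 0) = e" using B0[of 0] by simp
  have "cnj e = e" by (rule sym, rule Bsym[of 0 0, unfolded B00]) simp_all
  then have B0': "j < Suc k \<Longrightarrow> B $$ (0, j) = (if j = 0 then e else 0)" for j
    by (subst Bsym) (auto simp: B0)
  define A' where "A' = mat k k (\<lambda>(i, j). B $$ (Suc i, Suc j))"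
  have "mat_adjoint A' = A'"
  proof (rule eq_matI)
    fix i j assume "i < dim_row A'" "j < dim_col A'"
    then show "mat_adjoint A' $$ (i, j) = A' $$ (i, j)"
      using Bsym[of "Suc i" "Suc j"] by (simp add: A'_def)
  qed (simp_all add: A'_def)
  moreover have "B = block_diag_mat (mat 1 1 (\<lambda>_. e)) A'"
    by (rule eq_matI) (use B B0 B0' in \<open>auto simp: block_diag_mat_def A'_def\<close>)
  moreover have "A' \<in> carrier_mat k k" by (simp add: A'_def)
  ultimately show ?thesis using that by blast
qed

lemma hermitian_deflation:
  assumes A: "A \<in> carrier_mat (Suc k) (Suc k)" and AH: "mat_adjoint A = A"
  obtains W e A' where "unitary_mat (Suc k) W" "A' \<in> carrier_mat k k" "mat_adjoint A' = A'"
    "mat_adjoint W * A * W = block_diag_mat (mat 1 1 (\<lambda>_. e)) A'"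
proof -
  have "degree (char_poly A) = Suc k" using degree_monic_char_poly[OF A] by auto
  then obtain e where "poly (char_poly A) e = 0"
    using fundamental_theorem_of_algebra constant_degree by (metis nat.distinct(1))
  then have "eigenvalue A e" using eigenvalue_root_char_poly[OF A] by simp
  then have "eigenvector A (find_eigenvector A e) e" by (rule find_eigenvector[OF A])
  then obtain v where v: "v \<in> carrier_vec (Suc k)" "v \<noteq> 0\<^sub>v (Suc k)" and Av: "A *\<^sub>v v = e \<cdot>\<^sub>v v"
    using A unfolding eigenvector_def by auto
  obtain W c where W: "unitary_mat (Suc k) W" and cW: "col W 0 = c \<cdot>\<^sub>v v"
    using unitary_mat_with_first_col[OF v] by blast
  note Wc = unitary_matD(1)[OF W]
  have WH: "mat_adjoint W \<in> carrier_mat (Suc k) (Suc k)" using Wc by simp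
  have W0: "col W 0 \<in> carrier_vec (Suc k)" by (rule col_carrier_vec[OF _ Wc]) simp
  define B where "B = mat_adjoint W * A * W"
  have B: "B \<in> carrier_mat (Suc k) (Suc k)" using Wc A unfolding B_def by auto
  have BH: "mat_adjoint B = B"
    using mat_adjoint_congruence[OF WH A] AH unfolding B_def by simp
  have "A *\<^sub>v col W 0 = e \<cdot>\<^sub>v col W 0"
    unfolding cW using A v Av by (auto simp: mult_mat_vec smult_smult_assoc mult.commute)
  moreover have "col B 0 = mat_adjoint W *\<^sub>v (A *\<^sub>v col W 0)"
    unfolding B_def using col_mult2[OF mult_carrier_mat[OF WH A] Wc, of 0]
      assoc_mult_mat_vec[OF WH A W0] by simp
  ultimately have "col B 0 = e \<cdot>\<^sub>v (mat_adjoint W *\<^sub>v col W 0)"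
    using mult_mat_vec[OF WH W0] by simp
  also have "mat_adjoint W *\<^sub>v col W 0 = col (mat_adjoint W * W) 0"
    using col_mult2[OF WH Wc, of 0] by simp
  finally have "col B 0 = e \<cdot>\<^sub>v unit_vec (Suc k) 0" unfolding unitary_matD(2)[OF W] by simp
  with hermitian_block_diag_of_first_col[OF B BH] W show ?thesis
    unfolding B_def by (metis that)
qed

theorem hermitian_unitary_diagonalization:
  assumes "A \<in> carrier_mat n n" "mat_adjoint A = A"
  obtains U where "unitary_mat n U" "diagonal_mat (mat_adjoint U * A * U)"
  using assms
proof (induction n arbitrary: A thesis)
  case 0
  then show ?case by (intro "0.prems"(1)[of "1\<^sub>m 0"]) (auto simp: unitary_mat_def diagonal_mat_def)
next
  case (Suc k)
  obtain W e A' where W: "unitary_mat (Suc k) W" and A': "A' \<in> carrier_mat k k" "mat_adjoint A' = A'"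
    and WAW: "mat_adjoint W * A * W = block_diag_mat (mat 1 1 (\<lambda>_. e)) A'"
    using hermitian_deflation[OF Suc.prems(2,3)] by blast
  obtain U' where U': "unitary_mat k U'" and D': "diagonal_mat (mat_adjoint U' * A' * U')"
    using Suc.IH[OF _ A'] by blast
  define E where "E = block_diag_mat (1\<^sub>m 1) U'"
  have E: "unitary_mat (Suc k) E" unfolding E_def by (rule unitary_mat_block_diag_one[OF U'])
  note Wc = unitary_matD(1)[OF W] and U'c = unitary_matD(1)[OF U'] and Ec = unitary_matD(1)[OF E]
  have e1: "mat 1 1 (\<lambda>_. e) \<in> carrier_mat 1 1" by simp
  have U'AU': "mat_adjoint U' * A' * U' \<in> carrier_mat k k"
    using mult_carrier_mat[OF mult_carrier_mat[OF mat_adjoint_carrier[OF U'c] A'(1)] U'c] .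
  have "mat_adjoint (W * E) * A * (W * E) = mat_adjoint E * (mat_adjoint W * A * W) * E"
    using carrier_matD[OF Wc] carrier_matD[OF Ec] carrier_matD[OF Suc.prems(2)]
    by (simp add: mat_adjoint_mult[OF Wc Ec] assoc_mult_mat_dims)
  also have "\<dots> = block_diag_mat (mat 1 1 (\<lambda>_. e)) (mat_adjoint U' * A' * U')"
    unfolding WAW E_def mat_adjoint_block_diag_mat[OF one_carrier_mat U'c]
    using block_diag_mat_mult[OF one_carrier_mat e1 mat_adjoint_carrier[OF U'c] A'(1)]
      block_diag_mat_mult[OF e1 one_carrier_mat mult_carrier_mat[OF mat_adjoint_carrier[OF U'c] A'(1)] U'c]
      e1 by simp
  moreover have "diagonal_mat (block_diag_mat (mat 1 1 (\<lambda>_. e)) (mat_adjoint U' * A' * U'))"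
    by (rule diagonal_block_diag_mat[OF e1 U'AU' _ D']) (simp add: diagonal_mat_def)
  ultimately show ?case using Suc.prems(1)[OF unitary_mat_mult[OF W E]] by simp
qed

section \<open>Transferring a covariance between the two link directions\<close>

lemma dim_mat_diag [simp]: "dim_row (mat_diag n f) = n" "dim_col (mat_diag n f) = n"
  by (simp_all add: mat_diag_def)

lemma mat_adjoint_mat_diag: "mat_adjoint (mat_diag n f) = mat_diag n (\<lambda>i. cnj (f i))"
  by (rule eq_matI) (auto simp: mat_diag_def)

lemma diagonal_mat_eq_mat_diag:
  "Y \<in> carrier_mat n n \<Longrightarrow> diagonal_mat Y \<Longrightarrow> Y = mat_diag n (\<lambda>i. Y $$ (i, i))"
  by (rule eq_matI) (auto simp: mat_diag_def diagonal_mat_def)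

lemma mtrace_mult_mat_diag:
  "Y \<in> carrier_mat n n \<Longrightarrow> mtrace (Y * mat_diag n f) = (\<Sum>i<n. Y $$ (i, i) * f i)"
  unfolding mtrace_def by (simp add: mat_diag_mult_right)

lemma mtrace_unitary_conj:
  assumes V: "unitary_mat n V" and Q: "Q \<in> carrier_mat n n"
  shows "mtrace (mat_adjoint V * Q * V) = mtrace Q"
proof -
  note Vc = unitary_matD(1)[OF V]
  have "mtrace (mat_adjoint V * Q * V) = mtrace (mat_adjoint V * (Q * V))"
    using carrier_matD[OF Vc] carrier_matD[OF Q] by (simp add: assoc_mult_mat_dims)
  also have "\<dots> = mtrace (Q * V * mat_adjoint V)"
    using Vc Q by (intro mtrace_mult_comm[of _ n n]) auto
  also have "\<dots> = mtrace Q"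
    using carrier_matD[OF Vc] carrier_matD[OF Q] unitary_matD(3)[OF V] Q
    by (simp add: assoc_mult_mat_dims)
  finally show ?thesis .
qed

lemma mtrace_partial_isometry_congruence_le:
  assumes Z: "psd n Z" and X: "X \<in> carrier_mat m n"
    and XX: "mat_adjoint X * X = mat_diag n (\<lambda>i. if p i then 0 else 1)"
  shows "Re (mtrace (X * Z * mat_adjoint X)) \<le> Re (mtrace Z)"
proof -
  have Zc: "Z \<in> carrier_mat n n" using Z unfolding psd_def by auto
  have "mtrace (X * Z * mat_adjoint X) = mtrace (Z * mat_adjoint X * X)"
    using mtrace_mult_comm[OF X mult_carrier_mat[OF Zc mat_adjoint_carrier[OF X]]]
      carrier_matD[OF X] carrier_matD[OF Zc] by (simp add: assoc_mult_mat_dims)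
  also have "\<dots> = mtrace (Z * mat_diag n (\<lambda>i. if p i then 0 else 1))"
    using carrier_matD[OF X] carrier_matD[OF Zc] by (simp add: assoc_mult_mat_dims XX)
  finally have "Re (mtrace (X * Z * mat_adjoint X)) = (\<Sum>i<n. if p i then 0 else Re (Z $$ (i, i)))"
    by (auto simp: mtrace_mult_mat_diag[OF Zc] Re_sum intro!: sum.cong)
  also have "\<dots> \<le> (\<Sum>i<n. Re (Z $$ (i, i)))"
    by (rule sum_mono) (use psd_diag_entry(2)[OF Z] in auto)
  also have "\<dots> = Re (mtrace Z)"
    using Zc by (simp add: mtrace_def Re_sum)
  finally show ?thesis .
qed

lemma det_unitary_similar_plus_one:
  assumes V: "unitary_mat n V" and M: "M \<in> carrier_mat n n"
  shows "det (V * M * mat_adjoint V + 1\<^sub>m n) = det (M + 1\<^sub>m n)"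
proof -
  note Vc = unitary_matD(1)[OF V]
  have "det (V * M * mat_adjoint V + 1\<^sub>m n) = det (M * mat_adjoint V * V + 1\<^sub>m n)"
    using det_mult_plus_one_commute[OF Vc mult_carrier_mat[OF M mat_adjoint_carrier[OF Vc]]]
      carrier_matD[OF Vc] carrier_matD[OF M] by (simp add: assoc_mult_mat_dims)
  also have "M * mat_adjoint V * V = M"
    using unitary_matD(2)[OF V] carrier_matD[OF Vc] carrier_matD[OF M] M
    by (simp add: assoc_mult_mat_dims)
  finally show ?thesis .
qed

lemma det_congruence_plus_one:
  assumes G: "G \<in> carrier_mat m n" and Q: "Q \<in> carrier_mat n n"
  shows "det (G * Q * mat_adjoint G + 1\<^sub>m m) = det (Q * (mat_adjoint G * G) + 1\<^sub>m n)"
  using det_mult_plus_one_commute[OF G mult_carrier_mat[OF Q mat_adjoint_carrier[OF G]]]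
    carrier_matD[OF G] carrier_matD[OF Q] by (simp add: assoc_mult_mat_dims)

lemma psd_unitary_diagonalization:
  assumes A: "psd n A"
  obtains V s where "unitary_mat n V"
    "mat_adjoint V * A * V = mat_diag n (\<lambda>i. complex_of_real (s i ^ 2))"
proof -
  have Ac: "A \<in> carrier_mat n n" using A unfolding psd_def by auto
  obtain V where V: "unitary_mat n V" and diag: "diagonal_mat (mat_adjoint V * A * V)"
    using hermitian_unitary_diagonalization[OF Ac] A unfolding psd_def by blast
  define L where "L = mat_adjoint V * A * V"
  have L: "L \<in> carrier_mat n n" unfolding L_def using unitary_matD(1)[OF V] Ac by auto
  have Lpsd: "psd n L"
    using psd_congruence[OF A mat_adjoint_carrier[OF unitary_matD(1)[OF V]]] unfolding L_def by simp
  define s where "s i = sqrt (Re (L $$ (i, i)))" for i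
  have "L = mat_diag n (\<lambda>i. L $$ (i, i))"
    by (rule diagonal_mat_eq_mat_diag[OF L]) (use diag in \<open>simp add: L_def\<close>)
  also have "\<dots> = mat_diag n (\<lambda>i. complex_of_real (s i ^ 2))"
  proof (rule eq_matI)
    fix i j assume "i < dim_row (mat_diag n (\<lambda>i. complex_of_real (s i ^ 2)))"
      and "j < dim_col (mat_diag n (\<lambda>i. complex_of_real (s i ^ 2)))"
    then have i: "i < n" and j: "j < n" by auto
    have "L $$ (j, j) = complex_of_real (s j ^ 2)"
      by (subst psd_diag_entry(1)[OF Lpsd j])
        (simp add: s_def psd_diag_entry(2)[OF Lpsd j] del: of_real_power)
    then show "mat_diag n (\<lambda>i. L $$ (i, i)) $$ (i, j) = mat_diag n (\<lambda>i. complex_of_real (s i ^ 2)) $$ (i, j)"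
      using i j by (simp add: mat_diag_def del: of_real_power)
  qed simp_all
  finally show ?thesis using that[OF V] unfolding L_def by blast
qed

lemma mat_diag_pseudo_inverse:
  fixes n :: nat and s :: "nat \<Rightarrow> real"
  defines "D \<equiv> mat_diag n (\<lambda>i. if s i = 0 then 0 else complex_of_real (1 / s i))"
  shows "mat_diag n (\<lambda>i. complex_of_real (s i ^ 2)) * D = mat_diag n (\<lambda>i. complex_of_real (s i))"
    and "mat_adjoint D * mat_diag n (\<lambda>i. complex_of_real (s i ^ 2)) * D
      = mat_diag n (\<lambda>i. if s i = 0 then 0 else 1)"
  unfolding D_def mat_adjoint_mat_diag mat_diag_diag
  by (auto simp: power2_eq_square field_simps intro!: arg_cong[where f = "mat_diag n"])

text \<open>A thin singular value decomposition of \<open>G\<close>, read off from an eigendecomposition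
  \<open>G\<^sup>H G = V diag(s\<^sup>2) V\<^sup>H\<close>: the columns of \<open>X = G V diag(1/s)\<close> are orthonormal on the
  support of \<open>s\<close> and vanish off it.\<close>
lemma thin_svd:
  fixes G :: "complex mat"
  assumes G: "G \<in> carrier_mat m n"
  obtains V s X where "unitary_mat n V" "X \<in> carrier_mat m n"
    "mat_adjoint G * X = V * mat_diag n (\<lambda>i. complex_of_real (s i))"
    "mat_adjoint X * X = mat_diag n (\<lambda>i. if s i = 0 then 0 else 1)"
    "mat_adjoint G * G = V * mat_diag n (\<lambda>i. complex_of_real (s i ^ 2)) * mat_adjoint V"
proof -
  define A where "A = mat_adjoint G * G"
  have A: "A \<in> carrier_mat n n" unfolding A_def using mult_carrier_mat[OF mat_adjoint_carrier[OF G] G] .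
  have "psd n A"
    using psd_congruence[OF psd_one[of m] mat_adjoint_carrier[OF G]] G unfolding A_def by simp
  then obtain V s where V: "unitary_mat n V"
    and Ls: "mat_adjoint V * A * V = mat_diag n (\<lambda>i. complex_of_real (s i ^ 2))"
    by (rule psd_unitary_diagonalization)
  note Vc = unitary_matD(1)[OF V]
  define L where "L = mat_adjoint V * A * V"
  define D where "D = mat_diag n (\<lambda>i. if s i = 0 then 0 else complex_of_real (1 / s i))"
  define X where "X = G * V * D"
  have L: "L \<in> carrier_mat n n" and D: "D \<in> carrier_mat n n" and X: "X \<in> carrier_mat m n"
    unfolding L_def D_def X_def using G A Vc by auto
  note dims = carrier_matD[OF G] carrier_matD[OF A] carrier_matD[OF Vc] carrier_matD[OF L]
    carrier_matD[OF D] carrier_matD[OF X]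
  have VL: "V * L = A * V"
    unfolding L_def using unitary_matD(3)[OF V] dims by (simp add: assoc_mult_mat_dims flip: assoc_mult_mat_dims)
  have "mat_adjoint G * X = V * L * D"
    unfolding VL X_def A_def using dims by (simp add: assoc_mult_mat_dims)
  also have "\<dots> = V * (L * D)"
    using dims by (simp add: assoc_mult_mat_dims)
  also have "L * D = mat_diag n (\<lambda>i. complex_of_real (s i))"
    unfolding L_def Ls D_def by (rule mat_diag_pseudo_inverse(1))
  finally have GX: "mat_adjoint G * X = V * mat_diag n (\<lambda>i. complex_of_real (s i))" .
  have "mat_adjoint X = mat_adjoint D * (mat_adjoint V * mat_adjoint G)"
    unfolding X_def mat_adjoint_mult[OF mult_carrier_mat[OF G Vc] D] mat_adjoint_mult[OF G Vc] ..
  then have "mat_adjoint X * X = mat_adjoint D * L * D"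
    unfolding L_def A_def using dims by (simp add: X_def assoc_mult_mat_dims)
  also have "\<dots> = mat_diag n (\<lambda>i. if s i = 0 then 0 else 1)"
    unfolding L_def Ls D_def by (rule mat_diag_pseudo_inverse(2))
  finally have XX: "mat_adjoint X * X = mat_diag n (\<lambda>i. if s i = 0 then 0 else 1)" .
  have "mat_adjoint G * G = V * L * mat_adjoint V"
    unfolding VL A_def using unitary_matD(3)[OF V] dims by (simp add: assoc_mult_mat_dims)
  then show ?thesis using that[OF V X GX XX] unfolding L_def Ls by blast
qed

lemma dual_covariance_exists:
  fixes G :: "complex mat"
  assumes G: "G \<in> carrier_mat m n" and Q: "cov_feas n P Q"
  obtains F where "cov_feas m P F"
    "det (mat_adjoint G * F * G + 1\<^sub>m n) = det (G * Q * mat_adjoint G + 1\<^sub>m m)"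
proof -
  have Qpsd: "psd n Q" and QP: "Re (mtrace Q) \<le> P" and Qc: "Q \<in> carrier_mat n n"
    using Q unfolding cov_feas_def psd_def by auto
  obtain V s X where V: "unitary_mat n V" and X: "X \<in> carrier_mat m n"
    and GX: "mat_adjoint G * X = V * mat_diag n (\<lambda>i. complex_of_real (s i))"
    and XX: "mat_adjoint X * X = mat_diag n (\<lambda>i. if s i = 0 then 0 else 1)"
    and GG: "mat_adjoint G * G = V * mat_diag n (\<lambda>i. complex_of_real (s i ^ 2)) * mat_adjoint V"
    using thin_svd[OF G] by blast
  note Vc = unitary_matD(1)[OF V]
  define S where "S = mat_diag n (\<lambda>i. complex_of_real (s i))"
  have S: "S \<in> carrier_mat n n" and SH: "mat_adjoint S = S" unfolding S_def
    by (simp_all add: mat_adjoint_mat_diag)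
  have SS: "S * S = mat_diag n (\<lambda>i. complex_of_real (s i ^ 2))"
    unfolding S_def mat_diag_diag by (simp add: power2_eq_square)
  define Z where "Z = mat_adjoint V * Q * V"
  define F where "F = X * Z * mat_adjoint X"
  have Zpsd: "psd n Z" using psd_congruence[OF Qpsd mat_adjoint_carrier[OF Vc]] unfolding Z_def by simp
  have Z: "Z \<in> carrier_mat n n" using Zpsd unfolding psd_def by simp
  note dims = carrier_matD[OF G] carrier_matD[OF Qc] carrier_matD[OF Vc] carrier_matD[OF X]
    carrier_matD[OF S] carrier_matD[OF Z]
  have "Re (mtrace F) \<le> Re (mtrace Z)"
    unfolding F_def by (rule mtrace_partial_isometry_congruence_le[OF Zpsd X XX])
  also have "mtrace Z = mtrace Q" unfolding Z_def by (rule mtrace_unitary_conj[OF V Qc])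
  finally have trF: "Re (mtrace F) \<le> P" using QP by simp
  have XG: "mat_adjoint X * G = S * mat_adjoint V"
    using arg_cong[OF GX, of mat_adjoint] mat_adjoint_mult[OF mat_adjoint_carrier[OF G] X]
      mat_adjoint_mult[OF Vc S] SH
    unfolding S_def by simp
  have "mat_adjoint G * F * G = (mat_adjoint G * X) * Z * (mat_adjoint X * G)"
    unfolding F_def using dims by (simp add: assoc_mult_mat_dims)
  also have "\<dots> = V * (S * Z * S) * mat_adjoint V"
    unfolding GX[folded S_def] XG using dims by (simp add: assoc_mult_mat_dims)
  finally have "det (mat_adjoint G * F * G + 1\<^sub>m n) = det (S * Z * S + 1\<^sub>m n)"
    using det_unitary_similar_plus_one[OF V, of "S * Z * S"] S Z by simp
  also have "\<dots> = det (Z * S * S + 1\<^sub>m n)"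
    using det_mult_plus_one_commute[OF S, of "Z * S"] S Z dims by (simp add: assoc_mult_mat_dims)
  finally have detB: "det (mat_adjoint G * F * G + 1\<^sub>m n) = det (Z * S * S + 1\<^sub>m n)" .
  have "V * Z * mat_adjoint V = (V * mat_adjoint V) * Q * (V * mat_adjoint V)"
    unfolding Z_def using dims by (simp add: assoc_mult_mat_dims)
  then have QZ: "Q = V * Z * mat_adjoint V"
    using unitary_matD(3)[OF V] Qc by simp
  have "det (G * Q * mat_adjoint G + 1\<^sub>m m) = det (Q * (mat_adjoint G * G) + 1\<^sub>m n)"
    by (rule det_congruence_plus_one[OF G Qc])
  also have "Q * (mat_adjoint G * G) = V * Z * (mat_adjoint V * V) * (S * S) * mat_adjoint V"
    unfolding GG SS[symmetric] QZ using dims by (simp add: assoc_mult_mat_dims)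
  also have "\<dots> = V * (Z * S * S) * mat_adjoint V"
    using unitary_matD(2)[OF V] Z dims by (simp add: assoc_mult_mat_dims)
  also have "det (\<dots> + 1\<^sub>m n) = det (Z * S * S + 1\<^sub>m n)"
    using det_unitary_similar_plus_one[OF V, of "Z * S * S"] S Z by simp
  finally have "det (G * Q * mat_adjoint G + 1\<^sub>m m) = det (Z * S * S + 1\<^sub>m n)" .
  moreover have "psd m F" unfolding F_def by (rule psd_congruence[OF Zpsd X])
  ultimately show ?thesis using that[of F] trF detB unfolding cov_feas_def by simp
qed

lemma objB_eq_objA_exists:
  assumes G: "G \<in> carrier_mat m n" and Q: "cov_feas n P Q"
  shows "\<exists>F. cov_feas m P F \<and> objB G F = objA G Q"
proof -
  obtain F where "cov_feas m P F"
    "det (mat_adjoint G * F * G + 1\<^sub>m n) = det (G * Q * mat_adjoint G + 1\<^sub>m m)"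
    using dual_covariance_exists[OF G Q] by blast
  then show ?thesis using G unfolding objA_def objB_def by auto
qed

lemma objA_eq_objB_exists:
  assumes G: "G \<in> carrier_mat m n" and F: "cov_feas m P F"
  shows "\<exists>Q. cov_feas n P Q \<and> objA G Q = objB G F"
proof -
  obtain Q where "cov_feas n P Q"
    "det (G * Q * mat_adjoint G + 1\<^sub>m m) = det (mat_adjoint G * F * G + 1\<^sub>m n)"
    using dual_covariance_exists[OF mat_adjoint_carrier[OF G] F] by auto
  then show ?thesis using G unfolding objA_def objB_def by auto
qed

section \<open>Optimal values of the two problems\<close>

lemma optA_value_eq_optB_value:
  assumes G: "\<And>w. Gf w \<in> carrier_mat M N"
    and A: "optA Gf N W P Qs ws" and B: "optB Gf M N W P Fd wd"
  shows "objA (Gf ws) Qs = objB (Gf wd) Fd"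
proof -
  obtain F where "cov_feas M P F" "objB (Gf ws) F = objA (Gf ws) Qs"
    using objB_eq_objA_exists[OF G] A unfolding optA_def by blast
  then have "objA (Gf ws) Qs \<le> objB (Gf wd) Fd" using A B unfolding optA_def optB_def by metis
  moreover obtain Q where "cov_feas N P Q" "objA (Gf wd) Q = objB (Gf wd) Fd"
    using objA_eq_objB_exists[OF G] B unfolding optB_def by blast
  then have "objB (Gf wd) Fd \<le> objA (Gf ws) Qs" using A B unfolding optA_def optB_def by metis
  ultimately show ?thesis by linarith
qed

lemma optB_w_imp_optB:
  assumes G: "\<And>w. Gf w \<in> carrier_mat M N"
    and A: "optA Gf N W P Qs ws" and B: "optB Gf M N W P Fd wd" and Fs: "optB_w Gf M P ws Fs"
  shows "optB Gf M N W P Fs ws \<and> objB (Gf ws) Fs = objB (Gf wd) Fd"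
proof -
  have ws: "ws \<in> posset N W" and Qs: "cov_feas N P Qs" using A unfolding optA_def by auto
  have maxB: "\<And>F' w'. cov_feas M P F' \<Longrightarrow> w' \<in> posset N W \<Longrightarrow> objB (Gf w') F' \<le> objB (Gf wd) Fd"
    using B unfolding optB_def by auto
  have Fs_feas: "cov_feas M P Fs" and maxFs: "\<And>F'. cov_feas M P F' \<Longrightarrow> objB (Gf ws) F' \<le> objB (Gf ws) Fs"
    using Fs unfolding optB_w_def by auto
  obtain F where F: "cov_feas M P F" and "objB (Gf ws) F = objA (Gf ws) Qs"
    using objB_eq_objA_exists[OF G Qs] by blast
  then have "objB (Gf ws) Fs = objB (Gf wd) Fd"
    using maxFs[OF F] optA_value_eq_optB_value[OF G A B] maxB[OF Fs_feas ws] by linarith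
  then show ?thesis using Fs_feas ws maxB unfolding optB_def by auto
qed

lemma optA_w_imp_optA:
  assumes G: "\<And>w. Gf w \<in> carrier_mat M N"
    and A: "optA Gf N W P Qs ws" and B: "optB Gf M N W P Fd wd" and Qd: "optA_w Gf N P wd Qd"
  shows "optA Gf N W P Qd wd \<and> objA (Gf ws) Qs = objA (Gf wd) Qd"
proof -
  have wd: "wd \<in> posset N W" and Fd: "cov_feas M P Fd" using B unfolding optB_def by auto
  have maxA: "\<And>Q' w'. cov_feas N P Q' \<Longrightarrow> w' \<in> posset N W \<Longrightarrow> objA (Gf w') Q' \<le> objA (Gf ws) Qs"
    using A unfolding optA_def by auto
  have Qd_feas: "cov_feas N P Qd" and maxQd: "\<And>Q'. cov_feas N P Q' \<Longrightarrow> objA (Gf wd) Q' \<le> objA (Gf wd) Qd"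
    using Qd unfolding optA_w_def by auto
  obtain Q where Q: "cov_feas N P Q" and "objA (Gf wd) Q = objB (Gf wd) Fd"
    using objA_eq_objB_exists[OF G Fd] by blast
  then have "objA (Gf ws) Qs = objA (Gf wd) Qd"
    using maxQd[OF Q] optA_value_eq_optB_value[OF G A B] maxA[OF Qd_feas wd] by linarith
  then show ?thesis using Qd_feas wd maxA unfolding optA_def by auto
qed

lemma chan_carrier: "chan M N L lam gamma beta theta w \<in> carrier_mat M N"
  unfolding chan_def A_R_def Gamma_mat_def A_T_def
  by (intro smult_carrier_mat mult_carrier_mat[of _ M L _ N] mult_carrier_mat[of _ M L _ L]
      mat_adjoint_carrier) auto

theorem theorem5:
  fixes M N L :: nat and lam P W :: real
    and gamma :: "nat \<Rightarrow> complex" and beta theta :: "nat \<Rightarrow> real"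
    and Qs Fd :: "complex mat" and ws wd :: "real vec"
  defines "G \<equiv> chan M N L lam gamma beta theta"
  assumes lam: "lam > 0" and P: "P > 0" and W: "W > 0"
    and beta: "\<forall>l<L. 0 \<le> beta l \<and> beta l \<le> pi"
    and theta: "\<forall>l<L. 0 \<le> theta l \<and> theta l \<le> pi"
    and optA: "optA G N W P Qs ws"
    and optB: "optB G M N W P Fd wd"
  shows "objA (G ws) Qs = objB (G wd) Fd \<and>
         (\<forall>Fs. optB_w G M P ws Fs \<longrightarrow>
             optB G M N W P Fs ws \<and> objB (G ws) Fs = objB (G wd) Fd) \<and>
         (\<forall>Qd. optA_w G N P wd Qd \<longrightarrow>
             optA G N W P Qd wd \<and> objA (G ws) Qs = objA (G wd) Qd)"
proof -
  have G: "\<And>w. G w \<in> carrier_mat M N" unfolding G_def by (rule chan_carrier)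
  show ?thesis
    using optA_value_eq_optB_value[OF G optA optB] optB_w_imp_optB[OF G optA optB]
      optA_w_imp_optA[OF G optA optB] by blast
qed

end
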